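(* Let integers $n \geq 0$, $m \geq 1$ and $k \geq 1$ be given, and let $p=(p_1,\dots,p_m)$ be a probability distribution on $\{1,\dots,m\}$. Throw $n$ balls independently into $m$ bins, each ball landing in bin $i$ with probability $p_i$, and let $M_n$ be the maximum load of any bin after the $n$ balls are thrown. Then \[ \Pr[\mathrm{Bin}(n, \|p\|_k) \geq k] \;\leq\; \Pr[M_n \geq k] \;\leq\; \binom{n}{k}\|p\|_k^{k}, \] where $\|p\|_k = \left(\sum_{i=1}^m p_i^k\right)^{1/k}$.
   Context: $\mathrm{Bin}(n,\alpha)$ denotes a binomial random variable with $n$ trials and success probability $\alpha$. The load of a bin is the number of balls that landed in it. *)

theory Defs
  imports "HOL-Probability.Probability"
begin

definition bin_pmf :: "(nat \<Rightarrow> real) \<Rightarrow> nat \<Rightarrow> nat pmf" where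
  "bin_pmf p m = embed_pmf (\<lambda>i. if i \<in> {1..m} then p i else 0)"

definition balls_pmf :: "nat \<Rightarrow> (nat \<Rightarrow> real) \<Rightarrow> nat \<Rightarrow> (nat \<Rightarrow> nat) pmf" where
  "balls_pmf n p m = Pi_pmf {..<n} 0 (\<lambda>_. bin_pmf p m)"

definition load :: "nat \<Rightarrow> (nat \<Rightarrow> nat) \<Rightarrow> nat \<Rightarrow> nat" where
  "load n \<omega> i = card {j \<in> {..<n}. \<omega> j = i}"

definition max_load :: "nat \<Rightarrow> nat \<Rightarrow> (nat \<Rightarrow> nat) \<Rightarrow> nat" where
  "max_load n m \<omega> = Max ((\<lambda>i. load n \<omega> i) ` {1..m})"

definition knorm :: "nat \<Rightarrow> (nat \<Rightarrow> real) \<Rightarrow> nat \<Rightarrow> real" where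
  "knorm k p m = (\<Sum>i=1..m. p i ^ k) powr (1 / real k)"

end

theory Submission
  imports Defs
begin

(* The upper bound is a union bound over the bins and the k-element sets of balls.
   For the lower bound, write the probability that every bin receives fewer than k balls as a
   polynomial in the bin probabilities, with an extra uncapped bin of weight d (initially 0).
   Replacing two capped bins of weights a and b by one capped bin of weight c = (a^k + b^k)^(1/k)
   and moving the excess a + b - c into the uncapped bin never decreases this polynomial.
   After merging all m bins one capped bin of weight ||p||_k remains, and the polynomial becomes
   Pr[Bin(n, ||p||_k) < k]. *)

section \<open>Truncated binomial sums\<close>

(* For z = 1 - x this is Pr[Bin(n, x) < k]. *)
definition binomial_head :: "nat \<Rightarrow> nat \<Rightarrow> real \<Rightarrow> real \<Rightarrow> real" where
  "binomial_head k n x z = (\<Sum>l<k. real (n choose l) * x ^ l * z ^ (n - l))"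

lemma sum_choose_Suc_split:
  fixes A :: "'a::comm_semiring_1"
  shows "(\<Sum>j<T. of_nat (Suc n choose j) * A ^ j * F (Suc n - j)) =
         (\<Sum>j<T. of_nat (n choose j) * A ^ j * F (Suc n - j))
         + A * (\<Sum>j<T - 1. of_nat (n choose j) * A ^ j * F (n - j))"
proof (cases T)
  case (Suc T')
  have "(\<Sum>j<Suc T'. of_nat (Suc n choose j) * A ^ j * F (Suc n - j)) =
        F (Suc n) + (\<Sum>j<T'. of_nat (n choose Suc j) * A ^ Suc j * F (n - j))
        + (\<Sum>j<T'. of_nat (n choose j) * A ^ Suc j * F (n - j))"
    by (subst sum.lessThan_Suc_shift) (simp add: sum.distrib algebra_simps)
  also have "F (Suc n) + (\<Sum>j<T'. of_nat (n choose Suc j) * A ^ Suc j * F (n - j)) =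
             (\<Sum>j<Suc T'. of_nat (n choose j) * A ^ j * F (Suc n - j))"
    by (subst sum.lessThan_Suc_shift) simp
  finally show ?thesis
    by (simp add: Suc sum_distrib_left algebra_simps)
qed simp

lemma binomial_head_Suc:
  "binomial_head (Suc k) (Suc n) x z =
     (x + z) * binomial_head (Suc k) n x z - real (n choose k) * x ^ Suc k * z ^ (n - k)"
proof -
  have shift: "real (n choose j) * x ^ j * z ^ (Suc n - j) = z * (real (n choose j) * x ^ j * z ^ (n - j))"
    for j by (cases "j \<le> n") (simp_all add: Suc_diff_le)
  have "binomial_head (Suc k) (Suc n) x z =
        z * binomial_head (Suc k) n x z + x * (\<Sum>j<k. real (n choose j) * x ^ j * z ^ (n - j))"
    unfolding binomial_head_def sum_choose_Suc_split[where F = "\<lambda>r. z ^ r"]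
    by (simp add: shift sum_distrib_left distrib_left)
  also have "(\<Sum>j<k. real (n choose j) * x ^ j * z ^ (n - j)) =
             binomial_head (Suc k) n x z - real (n choose k) * x ^ k * z ^ (n - k)"
    unfolding binomial_head_def by simp
  finally show ?thesis
    by (simp add: algebra_simps)
qed

(* Splitting the event Bin(n, x/s) >= k according to the position t of the k-th success gives
   s^n - binomial_head k n x (s - x) = x^k * (\<Sum>t=k..n. C(t-1, k-1) * (s - x)^(t-k) * s^(n-t)).
   The second factor is decreasing in x; this drives the merging step. *)
primrec binomial_tail_factor :: "nat \<Rightarrow> nat \<Rightarrow> real \<Rightarrow> real \<Rightarrow> real" where
  "binomial_tail_factor k 0 x s = 0"
| "binomial_tail_factor k (Suc n) x s =
     s * binomial_tail_factor k n x s + real (n choose (k - 1)) * (s - x) ^ (Suc n - k)"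

lemma binomial_head_eq_power_minus_tail:
  assumes "k \<ge> 1"
  shows "binomial_head k n x (s - x) = s ^ n - x ^ k * binomial_tail_factor k n x s"
proof -
  obtain k' where k: "k = Suc k'"
    using assms by (cases k) auto
  show ?thesis
    unfolding k
  proof (induction n)
    case 0
    show ?case
      unfolding binomial_head_def by (subst sum.lessThan_Suc_shift) simp
  next
    case (Suc n)
    show ?case
      unfolding binomial_head_Suc Suc.IH by (simp add: algebra_simps)
  qed
qed

lemma binomial_tail_factor_antimono:
  assumes "0 \<le> x" "x \<le> x'" "x' \<le> s"
  shows "binomial_tail_factor k n x' s \<le> binomial_tail_factor k n x s"
proof (induction n)
  case (Suc n)
  have "s * binomial_tail_factor k n x' s \<le> s * binomial_tail_factor k n x s"
    using Suc assms by (intro mult_left_mono) auto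
  moreover have "(s - x') ^ (Suc n - k) \<le> (s - x) ^ (Suc n - k)"
    using assms by (intro power_mono) auto
  ultimately show ?case
    by (simp add: add_mono mult_left_mono)
qed simp

lemma binomial_head_zero_left:
  assumes "k \<ge> 1"
  shows "binomial_head k n 0 z = z ^ n"
  using binomial_head_eq_power_minus_tail[OF assms, of n 0 z] assms by simp

lemma binomial_head_nonneg:
  "0 \<le> x \<Longrightarrow> 0 \<le> z \<Longrightarrow> 0 \<le> binomial_head k n x z"
  unfolding binomial_head_def by (intro sum_nonneg) simp

lemma sum_lessThan_eq_sum_atMost_if:
  fixes f :: "nat \<Rightarrow> 'a::comm_monoid_add"
  assumes "\<And>j. j > n \<Longrightarrow> f j = 0"
  shows "(\<Sum>j<k. f j) = (\<Sum>j\<le>n. if j < k then f j else 0)"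
proof -
  have "(\<Sum>j\<le>n. if j < k then f j else 0) = (\<Sum>j\<in>{..n} \<inter> {..<k}. f j)"
    by (simp add: sum.inter_restrict)
  also have "\<dots> = (\<Sum>j<k. f j)"
    using assms by (intro sum.mono_neutral_left) (auto simp: not_le[symmetric])
  finally show ?thesis ..
qed

lemma binomial_head_altdef:
  "binomial_head k n x z = (\<Sum>j\<le>n. if j < k then real (n choose j) * x ^ j * z ^ (n - j) else 0)"
  unfolding binomial_head_def by (rule sum_lessThan_eq_sum_atMost_if) simp

lemma binomial_head_reflect:
  "(\<Sum>j\<le>n. if n - j < k then real (n choose j) * x ^ j * z ^ (n - j) else 0) = binomial_head k n z x"
  unfolding binomial_head_altdef
  by (rule sum.reindex_bij_witness[where i = "\<lambda>j. n - j" and j = "\<lambda>j. n - j"])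
     (auto simp: binomial_symmetric[symmetric] mult_ac)

section \<open>Merging two capped bins\<close>

lemma power_add_power_le_power_add:
  fixes x y :: "'a::linordered_semidom"
  assumes "0 \<le> x" "0 \<le> y" "k \<ge> 1"
  shows "x ^ k + y ^ k \<le> (x + y) ^ k"
  using assms(3)
proof (induction k rule: dec_induct)
  case (step k)
  have "x ^ Suc k + y ^ Suc k \<le> (x + y) * (x ^ k + y ^ k)"
    using assms by (simp add: algebra_simps add_increasing)
  also have "\<dots> \<le> (x + y) * (x + y) ^ k"
    using step.IH assms by (intro mult_left_mono) auto
  finally show ?case
    by simp
qed simp

lemma sum_power_le_power_sum:
  fixes a :: "'b \<Rightarrow> 'a::linordered_semidom"
  assumes "k \<ge> 1" "\<And>i. i \<in> A \<Longrightarrow> 0 \<le> a i"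
  shows "(\<Sum>i\<in>A. a i ^ k) \<le> (\<Sum>i\<in>A. a i) ^ k"
  using assms(2)
proof (induction A rule: infinite_finite_induct)
  case (insert i A)
  have "(\<Sum>j\<in>insert i A. a j ^ k) \<le> a i ^ k + (\<Sum>j\<in>A. a j) ^ k"
    using insert by simp
  also have "\<dots> \<le> (a i + (\<Sum>j\<in>A. a j)) ^ k"
    using insert.prems assms(1) by (intro power_add_power_le_power_add sum_nonneg) auto
  finally show ?case
    using insert by simp
qed (use assms(1) in simp_all)

lemma power_eq_add_power_bounds:
  fixes a b c :: "'a::linordered_semidom"
  assumes "k \<ge> 1" "0 \<le> a" "0 \<le> b" "0 \<le> c" "c ^ k = a ^ k + b ^ k"
  shows "a \<le> c" "b \<le> c" "c \<le> a + b"
proof -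
  have "a ^ k \<le> c ^ k" "b ^ k \<le> c ^ k" "c ^ k \<le> (a + b) ^ k"
    using assms power_add_power_le_power_add[of a b k] by simp_all
  then show "a \<le> c" "b \<le> c" "c \<le> a + b"
    using assms(1-4) by (simp_all add: power_mono_iff)
qed

(* With s = a + b and N the tail factor, inclusion-exclusion writes the left side as
   s^y - a^k N(a) - b^k N(b) (if y < 2k - 1; otherwise it is 0).  Since N is decreasing and
   a, b \<le> c, this is at most s^y - (a^k + b^k) N(c) = s^y - c^k N(c). *)
lemma capped_pair_le_binomial_head:
  assumes k: "k \<ge> 1" and a: "0 \<le> a" and b: "0 \<le> b" and c: "0 \<le> c" and ck: "c ^ k = a ^ k + b ^ k"
  shows "(\<Sum>j\<le>y. if j < k \<and> y - j < k then real (y choose j) * a ^ j * b ^ (y - j) else 0)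
           \<le> binomial_head k y c (a + b - c)"
proof (cases "y + 1 < 2 * k")
  case True
  define s where "s = a + b"
  define g where "g j = real (y choose j) * a ^ j * b ^ (y - j)" for j
  have ca: "a \<le> c" and cb: "b \<le> c" and cs: "c \<le> s"
    using power_eq_add_power_bounds[OF k a b c ck] by (simp_all add: s_def)
  have "(if j < k \<and> y - j < k then g j else 0) =
        (if j < k then g j else 0) + (if y - j < k then g j else 0) - g j" if "j \<le> y" for j
    using True that by auto
  then have "(\<Sum>j\<le>y. if j < k \<and> y - j < k then g j else 0) =
             binomial_head k y a b + binomial_head k y b a - s ^ y"
    unfolding binomial_head_reflect[of y k a b, symmetric] unfolding binomial_head_altdef g_def s_def
    by (simp add: sum.distrib sum_subtractf binomial_ring)
  also have "\<dots> = s ^ y - a ^ k * binomial_tail_factor k y a s - b ^ k * binomial_tail_factor k y b s"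
    using binomial_head_eq_power_minus_tail[OF k, of y a s] binomial_head_eq_power_minus_tail[OF k, of y b s]
    by (simp add: s_def)
  also have "\<dots> \<le> s ^ y - c ^ k * binomial_tail_factor k y c s"
    using binomial_tail_factor_antimono[OF a ca cs, of k y] binomial_tail_factor_antimono[OF b cb cs, of k y]
      a b unfolding ck by (simp add: algebra_simps add_mono mult_left_mono)
  also have "\<dots> = binomial_head k y c (s - c)"
    using binomial_head_eq_power_minus_tail[OF k] by simp
  finally show ?thesis
    unfolding g_def s_def .
next
  case False
  then have "(\<Sum>j\<le>y. if j < k \<and> y - j < k then real (y choose j) * a ^ j * b ^ (y - j) else 0) = 0"
    by (intro sum.neutral) auto
  moreover have "c \<le> a + b"
    using power_eq_add_power_bounds[OF k a b c ck] by simp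
  ultimately show ?thesis
    using c by (simp add: binomial_head_nonneg)
qed

lemma sum_trinomial_regroup:
  fixes x z e :: real
  shows "(\<Sum>j\<le>n. \<Sum>l\<le>n - j. if P j l
            then real (n choose j) * real ((n - j) choose l) * x ^ j * z ^ l * e ^ (n - j - l) else 0)
       = (\<Sum>y\<le>n. real (n choose y) * e ^ (n - y) *
            (\<Sum>j\<le>y. if P j (y - j) then real (y choose j) * x ^ j * z ^ (y - j) else 0))"
proof -
  have "(\<Sum>j\<le>n. \<Sum>l\<le>n - j. f j l) = (\<Sum>y\<le>n. \<Sum>j\<le>y. f j (y - j))" for f :: "nat \<Rightarrow> nat \<Rightarrow> real"
  proof -
    have "(\<Sum>j\<le>n. \<Sum>l\<le>n - j. f j l) = (\<Sum>(j, l)\<in>{(i, j). i + j \<le> n}. f j l)"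
      by (subst sum.Sigma) (auto intro!: sum.cong)
    then show ?thesis
      by (simp add: sum.triangle_reindex_eq)
  qed
  moreover have "real (n choose j) * real ((n - j) choose (y - j)) = real (n choose y) * real (y choose j)"
    if "j \<le> y" "y \<le> n" for j y
    using choose_mult[of j y n] that by (simp flip: of_nat_mult)
  ultimately show ?thesis
    by (auto simp: sum_distrib_left algebra_simps intro!: sum.cong)
qed

lemma sum_binomial_head_expand:
  fixes x z e :: real
  shows "(\<Sum>j<k. real (n choose j) * x ^ j * binomial_head k (n - j) z e) =
         (\<Sum>j\<le>n. \<Sum>l\<le>n - j. if j < k \<and> l < k
            then real (n choose j) * real ((n - j) choose l) * x ^ j * z ^ l * e ^ (n - j - l) else 0)"
proof -
  have "(\<Sum>j<k. real (n choose j) * x ^ j * binomial_head k (n - j) z e) =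
        (\<Sum>j\<le>n. if j < k then real (n choose j) * x ^ j * binomial_head k (n - j) z e else 0)"
    by (rule sum_lessThan_eq_sum_atMost_if) simp
  then show ?thesis
    by (auto simp: binomial_head_altdef sum_distrib_left algebra_simps intro!: sum.cong)
qed

lemma binomial_head_add_expand:
  fixes x z e :: real
  shows "binomial_head k n x (z + e) =
         (\<Sum>j\<le>n. \<Sum>l\<le>n - j. if j < k
            then real (n choose j) * real ((n - j) choose l) * x ^ j * z ^ l * e ^ (n - j - l) else 0)"
  unfolding binomial_head_altdef binomial_ring
  by (auto simp: sum_distrib_left algebra_simps intro!: sum.cong)

lemma merge_capped_pair:
  assumes k: "k \<ge> 1" and a: "0 \<le> a" and b: "0 \<le> b" and c: "0 \<le> c" and e: "0 \<le> e"
    and ck: "c ^ k = a ^ k + b ^ k"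
  shows "(\<Sum>j<k. real (n choose j) * a ^ j * binomial_head k (n - j) b e) \<le> binomial_head k n c (a + b - c + e)"
proof -
  have "(\<Sum>j<k. real (n choose j) * a ^ j * binomial_head k (n - j) b e) =
        (\<Sum>y\<le>n. real (n choose y) * e ^ (n - y) *
           (\<Sum>j\<le>y. if j < k \<and> y - j < k then real (y choose j) * a ^ j * b ^ (y - j) else 0))"
    unfolding sum_binomial_head_expand by (rule sum_trinomial_regroup)
  also have "\<dots> \<le> (\<Sum>y\<le>n. real (n choose y) * e ^ (n - y) * binomial_head k y c (a + b - c))"
    using e by (intro sum_mono mult_left_mono capped_pair_le_binomial_head[OF k a b c ck]) auto
  also have "\<dots> = binomial_head k n c (a + b - c + e)"
    unfolding binomial_head_add_expand sum_trinomial_regroup unfolding binomial_head_altdef ..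
  finally show ?thesis .
qed

section \<open>The capped-load polynomial\<close>

(* For a probability vector (a 1, ..., a m, d) this is the probability that n balls thrown into
   bins 1..m with weights a and an extra uncapped bin with weight d leave every bin i \<le> m with
   load below t i: condition on the load j of bin m. *)
primrec capped_loads_poly :: "nat \<Rightarrow> (nat \<Rightarrow> real) \<Rightarrow> (nat \<Rightarrow> nat) \<Rightarrow> nat \<Rightarrow> real \<Rightarrow> real" where
  "capped_loads_poly 0 a t n d = d ^ n"
| "capped_loads_poly (Suc m) a t n d =
     (\<Sum>j<t (Suc m). real (n choose j) * a (Suc m) ^ j * capped_loads_poly m a t (n - j) d)"

lemma capped_loads_poly_cong:
  "(\<And>i. i \<in> {1..m} \<Longrightarrow> t i = t' i) \<Longrightarrow> capped_loads_poly m a t n d = capped_loads_poly m a t' n d"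
  by (induction m arbitrary: n) simp_all

lemma capped_loads_poly_zero_balls:
  "capped_loads_poly m a t 0 d = (if \<forall>i\<in>{1..m}. 0 < t i then 1 else 0)"
proof (induction m)
  case (Suc m)
  have "capped_loads_poly (Suc m) a t 0 d = (if 0 < t (Suc m) then capped_loads_poly m a t 0 d else 0)"
    by (cases "t (Suc m)") (simp_all add: lessThan_Suc_eq_insert_0 sum.reindex)
  then show ?case
    using Suc.IH by (auto simp: atLeastAtMostSuc_conv)
qed simp

lemma capped_loads_poly_Suc_balls:
  "capped_loads_poly m a t (Suc n) d =
     (\<Sum>y=1..m. a y * capped_loads_poly m a (t(y := t y - 1)) n d) + d * capped_loads_poly m a t n d"
proof (induction m arbitrary: n)
  case (Suc m)
  define T where "T = t (Suc m)"
  define A where "A = a (Suc m)"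
  let ?G = "capped_loads_poly m a"
  have last_bin: "?G (t(Suc m := T - 1)) r d = ?G t r d" for r
    by (rule capped_loads_poly_cong) auto
  have other_bins: "real (n choose j) * A ^ j * ?G t (Suc n - j) d =
      (\<Sum>y=1..m. a y * (real (n choose j) * A ^ j * ?G (t(y := t y - 1)) (n - j) d))
      + d * (real (n choose j) * A ^ j * ?G t (n - j) d)" for j
  proof (cases "j \<le> n")
    case True
    then have "?G t (Suc n - j) d =
        (\<Sum>y=1..m. a y * ?G (t(y := t y - 1)) (n - j) d) + d * ?G t (n - j) d"
      using Suc.IH[of "n - j"] by (simp only: Suc_diff_le)
    then show ?thesis
      by (simp only: sum_distrib_left distrib_left mult_ac)
  qed (simp add: binomial_eq_0)
  have "capped_loads_poly (Suc m) a t (Suc n) d =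
        (\<Sum>j<T. real (n choose j) * A ^ j * ?G t (Suc n - j) d)
        + A * (\<Sum>j<T - 1. real (n choose j) * A ^ j * ?G t (n - j) d)"
    unfolding capped_loads_poly.simps T_def A_def by (rule sum_choose_Suc_split[where F = "\<lambda>r. ?G t r d"])
  also have "(\<Sum>j<T. real (n choose j) * A ^ j * ?G t (Suc n - j) d) =
      (\<Sum>y=1..m. a y * capped_loads_poly (Suc m) a (t(y := t y - 1)) n d) + d * capped_loads_poly (Suc m) a t n d"
    unfolding other_bins sum.distrib by (subst sum.swap) (simp add: T_def A_def sum_distrib_left)
  also have "A * (\<Sum>j<T - 1. real (n choose j) * A ^ j * ?G t (n - j) d) =
      A * capped_loads_poly (Suc m) a (t(Suc m := T - 1)) n d"
    unfolding capped_loads_poly.simps last_bin by (simp add: A_def)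
  finally have recurrence: "capped_loads_poly (Suc m) a t (Suc n) d =
      (\<Sum>y=1..m. a y * capped_loads_poly (Suc m) a (t(y := t y - 1)) n d) + d * capped_loads_poly (Suc m) a t n d
      + A * capped_loads_poly (Suc m) a (t(Suc m := T - 1)) n d" .
  have split_last: "(\<Sum>y=1..Suc m. F y) = F (Suc m) + (\<Sum>y=1..m. F y)" for F :: "nat \<Rightarrow> real"
    by (rule sum.nat_ivl_Suc') simp
  show ?case
    unfolding recurrence split_last by (simp only: A_def T_def add_ac)
qed simp

lemma capped_loads_poly_le_binomial_head:
  assumes k: "k \<ge> 1" and a: "\<And>i. i \<in> {1..m} \<Longrightarrow> 0 \<le> a i" and d: "0 \<le> d"
    and b: "0 \<le> b" "b ^ k = (\<Sum>i=1..m. a i ^ k)"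
  shows "capped_loads_poly m a (\<lambda>_. k) n d \<le> binomial_head k n b ((\<Sum>i=1..m. a i) - b + d)"
  using a b
proof (induction m arbitrary: n b)
  case 0
  then have "b = 0"
    using k by simp
  then show ?case
    using binomial_head_zero_left[OF k] by simp
next
  case (Suc m)
  define A where "A = a (Suc m)"
  define S where "S = (\<Sum>i=1..m. a i)"
  define b' where "b' = root k (\<Sum>i=1..m. a i ^ k)"
  have A: "0 \<le> A"
    using Suc.prems by (simp add: A_def)
  have "0 \<le> (\<Sum>i=1..m. a i ^ k)"
    using Suc.prems(1) by (intro sum_nonneg) simp
  then have b': "0 \<le> b'" "b' ^ k = (\<Sum>i=1..m. a i ^ k)"
    using k by (simp_all add: b'_def)
  have "b' ^ k \<le> S ^ k"
    unfolding b'(2) S_def using Suc.prems(1) by (intro sum_power_le_power_sum[OF k]) simp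
  moreover have "0 \<le> S"
    unfolding S_def using Suc.prems(1) by (intro sum_nonneg) simp
  ultimately have e: "0 \<le> S - b' + d"
    using b'(1) k d by (simp add: power_mono_iff)
  have "capped_loads_poly (Suc m) a (\<lambda>_. k) n d =
        (\<Sum>j<k. real (n choose j) * A ^ j * capped_loads_poly m a (\<lambda>_. k) (n - j) d)"
    by (simp add: A_def)
  also have "\<dots> \<le> (\<Sum>j<k. real (n choose j) * A ^ j * binomial_head k (n - j) b' (S - b' + d))"
    using Suc.IH[OF _ b'] Suc.prems(1) A by (intro sum_mono mult_left_mono) (simp_all add: S_def)
  also have "\<dots> \<le> binomial_head k n b (A + b' - b + (S - b' + d))"
    using Suc.prems b' by (intro merge_capped_pair[OF k A b'(1) _ e]) (simp_all add: A_def)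
  also have "A + b' - b + (S - b' + d) = (\<Sum>i=1..Suc m. a i) - b + d"
    by (simp add: A_def S_def)
  finally show ?case .
qed

section \<open>Balls into bins\<close>

lemma pmf_bin_pmf:
  assumes "\<And>i. i \<in> {1..m} \<Longrightarrow> p i \<ge> 0" "(\<Sum>i=1..m. p i) = 1"
  shows "pmf (bin_pmf p m) i = (if i \<in> {1..m} then p i else 0)"
  unfolding bin_pmf_def
proof (rule pmf_embed_pmf)
  have "(\<integral>\<^sup>+x. ennreal (if x \<in> {1..m} then p x else 0) \<partial>count_space UNIV) =
        (\<Sum>x\<in>{1..m}. ennreal (if x \<in> {1..m} then p x else 0))"
    by (rule nn_integral_count_space') auto
  also have "\<dots> = ennreal (\<Sum>x\<in>{1..m}. p x)"
    using assms(1) by (subst sum_ennreal) auto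
  also have "\<dots> = 1"
    using assms(2) by simp
  finally show "(\<integral>\<^sup>+x. ennreal (if x \<in> {1..m} then p x else 0) \<partial>count_space UNIV) = 1" .
qed (use assms in auto)

lemma measure_bind_pmf_finite_support:
  assumes "finite A" "set_pmf M \<subseteq> A"
  shows "measure_pmf.prob (bind_pmf M N) X = (\<Sum>x\<in>A. pmf M x * measure_pmf.prob (N x) X)"
proof -
  have "ennreal (measure_pmf.prob (bind_pmf M N) X) = (\<integral>\<^sup>+x. emeasure (N x) X \<partial>M)"
    by (simp add: measure_pmf.emeasure_eq_measure[symmetric])
  also have "\<dots> = (\<Sum>x\<in>A. emeasure (N x) X * pmf M x)"
    using assms by (intro nn_integral_measure_pmf_support) (auto simp: set_pmf_iff)
  also have "\<dots> = (\<Sum>x\<in>A. ennreal (pmf M x * measure_pmf.prob (N x) X))"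
    by (simp add: measure_pmf.emeasure_eq_measure ennreal_mult' mult.commute)
  also have "\<dots> = ennreal (\<Sum>x\<in>A. pmf M x * measure_pmf.prob (N x) X)"
    by (intro sum_ennreal) simp
  finally show ?thesis
    by (simp add: sum_nonneg)
qed

lemma load_fun_upd: "load (Suc n) (f(n := y)) i = load n f i + (if y = i then 1 else 0)"
proof -
  have "{j \<in> {..<Suc n}. (f(n := y)) j = i} =
        (if y = i then insert n {j \<in> {..<n}. f j = i} else {j \<in> {..<n}. f j = i})"
    by (auto simp: less_Suc_eq)
  then show ?thesis
    unfolding load_def by simp
qed

lemma prob_loads_below_Suc:
  assumes p: "\<And>i. i \<in> {1..m} \<Longrightarrow> p i \<ge> 0" and s: "(\<Sum>i=1..m. p i) = 1"
  shows "measure_pmf.prob (balls_pmf (Suc n) p m) {\<omega>. \<forall>i\<in>{1..m}. load (Suc n) \<omega> i < t i} =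
    (\<Sum>y=1..m. p y * measure_pmf.prob (balls_pmf n p m) {\<omega>. \<forall>i\<in>{1..m}. load n \<omega> i < (t(y := t y - 1)) i})"
proof -
  have balls: "balls_pmf (Suc n) p m = bind_pmf (bin_pmf p m) (\<lambda>y. map_pmf (\<lambda>f. f(n := y)) (balls_pmf n p m))"
    unfolding balls_pmf_def lessThan_Suc by (subst Pi_pmf_insert') (auto simp: map_pmf_def)
  have support: "set_pmf (bin_pmf p m) \<subseteq> {1..m}"
    using pmf_bin_pmf[OF p s] by (auto simp: set_pmf_iff split: if_splits)
  have preimage: "(\<lambda>f. f(n := y)) -` {\<omega>. \<forall>i\<in>{1..m}. load (Suc n) \<omega> i < t i} =
      {\<omega>. \<forall>i\<in>{1..m}. load n \<omega> i < (t(y := t y - 1)) i}" for y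
    by (auto simp: load_fun_upd split: if_splits)
  show ?thesis
    unfolding balls measure_bind_pmf_finite_support[OF finite_atLeastAtMost support]
      measure_map_pmf preimage
    by (intro sum.cong refl) (use pmf_bin_pmf[OF p s] in simp)
qed

lemma prob_loads_below_eq_capped_loads_poly:
  assumes "\<And>i. i \<in> {1..m} \<Longrightarrow> p i \<ge> 0" "(\<Sum>i=1..m. p i) = 1"
  shows "measure_pmf.prob (balls_pmf n p m) {\<omega>. \<forall>i\<in>{1..m}. load n \<omega> i < t i} = capped_loads_poly m p t n 0"
proof (induction n arbitrary: t)
  case 0
  have "balls_pmf 0 p m = return_pmf (\<lambda>_. 0)"
    unfolding balls_pmf_def by simp
  then show ?case
    by (simp add: load_def capped_loads_poly_zero_balls indicator_def)
next
  case (Suc n)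
  have "measure_pmf.prob (balls_pmf (Suc n) p m) {\<omega>. \<forall>i\<in>{1..m}. load (Suc n) \<omega> i < t i} =
    (\<Sum>y=1..m. p y * measure_pmf.prob (balls_pmf n p m) {\<omega>. \<forall>i\<in>{1..m}. load n \<omega> i < (t(y := t y - 1)) i})"
    by (rule prob_loads_below_Suc[OF assms])
  also have "\<dots> = (\<Sum>y=1..m. p y * capped_loads_poly m p (t(y := t y - 1)) n 0)"
    by (simp only: Suc.IH)
  finally show ?case
    by (simp add: capped_loads_poly_Suc_balls)
qed

lemma prob_max_load_ge_eq:
  assumes "m \<ge> 1" "\<And>i. i \<in> {1..m} \<Longrightarrow> p i \<ge> 0" "(\<Sum>i=1..m. p i) = 1"
  shows "measure_pmf.prob (balls_pmf n p m) {\<omega>. max_load n m \<omega> \<ge> k} = 1 - capped_loads_poly m p (\<lambda>_. k) n 0"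
proof -
  have "max_load n m \<omega> < k \<longleftrightarrow> (\<forall>i\<in>{1..m}. load n \<omega> i < k)" for \<omega>
    unfolding max_load_def using assms(1) by (subst Max_less_iff) auto
  then have "{\<omega>. max_load n m \<omega> \<ge> k} = UNIV - {\<omega>. \<forall>i\<in>{1..m}. load n \<omega> i < k}"
    by (auto simp flip: not_le)
  then show ?thesis
    using measure_pmf.prob_compl[of "{\<omega>. \<forall>i\<in>{1..m}. load n \<omega> i < k}" "balls_pmf n p m"]
      prob_loads_below_eq_capped_loads_poly[OF assms(2,3), of n "\<lambda>_. k"]
    by simp
qed

lemma prob_balls_all_in_bin:
  assumes p: "\<And>i. i \<in> {1..m} \<Longrightarrow> p i \<ge> 0" and s: "(\<Sum>i=1..m. p i) = 1"
    and S: "S \<subseteq> {..<n}" and i: "i \<in> {1..m}"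
  shows "measure_pmf.prob (balls_pmf n p m) {\<omega>. \<forall>j\<in>S. \<omega> j = i} = p i ^ card S"
proof -
  have "{\<omega>. \<forall>j\<in>S. \<omega> j = i} = Pi {..<n} (\<lambda>j. if j \<in> S then {i} else UNIV)"
    using S by (auto simp: Pi_def)
  then have "measure_pmf.prob (balls_pmf n p m) {\<omega>. \<forall>j\<in>S. \<omega> j = i} =
      (\<Prod>j<n. measure_pmf.prob (bin_pmf p m) (if j \<in> S then {i} else UNIV))"
    unfolding balls_pmf_def by (simp add: measure_Pi_pmf_Pi)
  also have "\<dots> = (\<Prod>j<n. if j \<in> S then p i else 1)"
  proof -
    have "pmf (bin_pmf p m) i = p i"
      using pmf_bin_pmf[OF p s, of i] i by simp
    then show ?thesis
      by (intro prod.cong refl) (simp add: measure_pmf_single)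
  qed
  also have "\<dots> = p i ^ card S"
    using S by (simp add: prod.If_cases Int_absorb1)
  finally show ?thesis .
qed

lemma prob_max_load_ge_le:
  assumes m: "m \<ge> 1" and p: "\<And>i. i \<in> {1..m} \<Longrightarrow> p i \<ge> 0" and s: "(\<Sum>i=1..m. p i) = 1"
  shows "measure_pmf.prob (balls_pmf n p m) {\<omega>. max_load n m \<omega> \<ge> k} \<le> real (n choose k) * (\<Sum>i=1..m. p i ^ k)"
proof -
  let ?P = "measure_pmf.prob (balls_pmf n p m)"
  define SS where "SS = {S. S \<subseteq> {..<n} \<and> card S = k}"
  have fin: "finite SS"
    unfolding SS_def by (rule finite_subset[of _ "Pow {..<n}"]) auto
  have card: "card SS = n choose k"
    unfolding SS_def using n_subsets[of "{..<n}" k] by simp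
  have cover: "{\<omega>. max_load n m \<omega> \<ge> k} \<subseteq> (\<Union>i\<in>{1..m}. \<Union>S\<in>SS. {\<omega>. \<forall>j\<in>S. \<omega> j = i})"
  proof
    fix \<omega> assume "\<omega> \<in> {\<omega>. max_load n m \<omega> \<ge> k}"
    moreover have "max_load n m \<omega> \<in> (\<lambda>i. load n \<omega> i) ` {1..m}"
      unfolding max_load_def using m by (intro Max_in) auto
    then obtain i where i: "i \<in> {1..m}" "max_load n m \<omega> = load n \<omega> i"
      by auto
    ultimately obtain S where "S \<subseteq> {j \<in> {..<n}. \<omega> j = i}" "card S = k"
      unfolding load_def by (auto intro: obtain_subset_with_card_n)
    with i show "\<omega> \<in> (\<Union>i\<in>{1..m}. \<Union>S\<in>SS. {\<omega>. \<forall>j\<in>S. \<omega> j = i})"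
      unfolding SS_def by blast
  qed
  have "?P {\<omega>. max_load n m \<omega> \<ge> k} \<le> ?P (\<Union>i\<in>{1..m}. \<Union>S\<in>SS. {\<omega>. \<forall>j\<in>S. \<omega> j = i})"
    using cover by (rule measure_pmf.finite_measure_mono) simp
  also have "\<dots> \<le> (\<Sum>i=1..m. \<Sum>S\<in>SS. ?P {\<omega>. \<forall>j\<in>S. \<omega> j = i})"
    by (rule order.trans[OF measure_pmf.finite_measure_subadditive_finite sum_mono])
       (auto intro: measure_pmf.finite_measure_subadditive_finite fin)
  also have "\<dots> = (\<Sum>i=1..m. \<Sum>S\<in>SS. p i ^ k)"
    using prob_balls_all_in_bin[OF p s] by (intro sum.cong refl) (simp add: SS_def)
  also have "\<dots> = real (n choose k) * (\<Sum>i=1..m. p i ^ k)"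
    by (simp add: card sum_distrib_left)
  finally show ?thesis .
qed

lemma prob_binomial_ge_eq:
  assumes "0 \<le> q" "q \<le> 1"
  shows "measure_pmf.prob (binomial_pmf n q) {x. x \<ge> k} = 1 - binomial_head k n q (1 - q)"
proof -
  have "{x. x \<ge> k} = UNIV - {..<k}"
    by auto
  then have "measure_pmf.prob (binomial_pmf n q) {x. x \<ge> k} = 1 - (\<Sum>j<k. pmf (binomial_pmf n q) j)"
    using measure_pmf.prob_compl[of "{..<k}" "binomial_pmf n q"] by (simp add: measure_measure_pmf_finite)
  then show ?thesis
    unfolding binomial_head_def using assms by simp
qed

lemma knorm_power:
  assumes "k \<ge> 1" "\<And>i. i \<in> {1..m} \<Longrightarrow> p i \<ge> 0"
  shows "knorm k p m ^ k = (\<Sum>i=1..m. p i ^ k)"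
proof -
  have "0 \<le> (\<Sum>i=1..m. p i ^ k)"
    using assms(2) by (intro sum_nonneg) simp
  then show ?thesis
    unfolding knorm_def using assms(1) by (simp add: root_powr_inverse[symmetric])
qed

lemma knorm_le_one:
  assumes "k \<ge> 1" "\<And>i. i \<in> {1..m} \<Longrightarrow> p i \<ge> 0" "(\<Sum>i=1..m. p i) = 1"
  shows "knorm k p m \<le> 1"
proof -
  have "knorm k p m ^ k \<le> 1"
    using sum_power_le_power_sum[of k "{1..m}" p] assms knorm_power[OF assms(1,2)] by simp
  then show ?thesis
    using assms(1) by (simp add: knorm_def power_le_one_iff)
qed

theorem theorem1:
  fixes n m k :: nat and p :: "nat \<Rightarrow> real"
  assumes "m \<ge> 1" and "k \<ge> 1"
    and "\<And>i. i \<in> {1..m} \<Longrightarrow> p i \<ge> 0"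
    and "(\<Sum>i=1..m. p i) = 1"
  shows "measure_pmf.prob (binomial_pmf n (knorm k p m)) {x. x \<ge> k}
           \<le> measure_pmf.prob (balls_pmf n p m) {\<omega>. max_load n m \<omega> \<ge> k}
         \<and> measure_pmf.prob (balls_pmf n p m) {\<omega>. max_load n m \<omega> \<ge> k}
           \<le> real (n choose k) * knorm k p m ^ k"
proof
  note m = assms(1) and k = assms(2) and p = assms(3) and s = assms(4)
  define q where "q = knorm k p m"
  have q: "0 \<le> q" "q \<le> 1" "q ^ k = (\<Sum>i=1..m. p i ^ k)"
    unfolding q_def using knorm_le_one[OF k p s] knorm_power[OF k p] by (simp_all add: knorm_def)
  have "measure_pmf.prob (binomial_pmf n q) {x. x \<ge> k} = 1 - binomial_head k n q (1 - q)"
    by (rule prob_binomial_ge_eq[OF q(1,2)])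
  also have "\<dots> \<le> 1 - capped_loads_poly m p (\<lambda>_. k) n 0"
    using capped_loads_poly_le_binomial_head[OF k p order.refl q(1,3)] s by simp
  also have "\<dots> = measure_pmf.prob (balls_pmf n p m) {\<omega>. max_load n m \<omega> \<ge> k}"
    by (rule prob_max_load_ge_eq[OF m p s, symmetric])
  finally show "measure_pmf.prob (binomial_pmf n (knorm k p m)) {x. x \<ge> k}
      \<le> measure_pmf.prob (balls_pmf n p m) {\<omega>. max_load n m \<omega> \<ge> k}"
    by (simp add: q_def)
  show "measure_pmf.prob (balls_pmf n p m) {\<omega>. max_load n m \<omega> \<ge> k} \<le> real (n choose k) * knorm k p m ^ k"
    using prob_max_load_ge_le[OF m p s, of n k] q(3) by (simp add: q_def)
qed

end
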